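(* Let $\mathcal{L}$ be a Lie algebra and let $(U,\rho)$ be a finite-dimensional representation of $\mathcal{L}$. Suppose $x,y_1,y_2,\ldots\in\mathcal{L}$ satisfy $[x,y_k]=\nu_ky_k$ with $\nu_k\in\mathbb{C}$ for $k=1,2,\ldots$. Then the set $\{\nu_k:\rho(y_k)\neq 0\}$ has at most $(\dim U)^2-\dim U+1$ distinct elements. *)

theory Defs
  imports Main "Jordan_Normal_Form.Matrix"
begin

definition lie_algebra ::
  "(complex \<Rightarrow> 'L::ab_group_add \<Rightarrow> 'L) \<Rightarrow> ('L \<Rightarrow> 'L \<Rightarrow> 'L) \<Rightarrow> bool" where
  "lie_algebra sc br \<longleftrightarrow>
     vector_space sc \<and>
     (\<forall>a b c. br (a + b) c = br a c + br b c) \<and>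
     (\<forall>a b c. br a (b + c) = br a b + br a c) \<and>
     (\<forall>t a b. br (sc t a) b = sc t (br a b)) \<and>
     (\<forall>t a b. br a (sc t b) = sc t (br a b)) \<and>
     (\<forall>a. br a a = 0) \<and>
     (\<forall>a b c. br a (br b c) + br b (br c a) + br c (br a b) = 0)"

text \<open>A finite-dimensional representation of dimension n, given (after a choice
  of basis of U = complex^n) as a Lie algebra homomorphism into gl_n(complex).\<close>
definition lie_rep ::
  "(complex \<Rightarrow> 'L::ab_group_add \<Rightarrow> 'L) \<Rightarrow> ('L \<Rightarrow> 'L \<Rightarrow> 'L) \<Rightarrow> nat \<Rightarrow> ('L \<Rightarrow> complex mat) \<Rightarrow> bool" where
  "lie_rep sc br n \<rho> \<longleftrightarrow>
     (\<forall>a. \<rho> a \<in> carrier_mat n n) \<and>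
     (\<forall>a b. \<rho> (a + b) = \<rho> a + \<rho> b) \<and>
     (\<forall>t a. \<rho> (sc t a) = smult_mat t (\<rho> a)) \<and>
     (\<forall>a b. \<rho> (br a b) = \<rho> a * \<rho> b - \<rho> b * \<rho> a)"

end

theory Submission
  imports Defs "Jordan_Normal_Form.Schur_Decomposition"
begin

text \<open>Triangularise \<open>\<rho> x = P B P\<^sup>-\<^sup>1\<close> with \<open>B\<close> upper triangular. If \<open>[\<rho> x, \<rho> y] = \<nu> \<rho> y\<close>
  with \<open>\<rho> y \<noteq> 0\<close>, then \<open>Z = P\<^sup>-\<^sup>1 (\<rho> y) P \<noteq> 0\<close> satisfies \<open>B Z - Z B = \<nu> Z\<close>. At the nonzero
  entry \<open>(i, j)\<close> of \<open>Z\<close> in the lowest nonzero row and, within it, the leftmost column, this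
  equation reads \<open>(B\<^sub>i\<^sub>i - B\<^sub>j\<^sub>j) Z\<^sub>i\<^sub>j = \<nu> Z\<^sub>i\<^sub>j\<close>. So every such \<open>\<nu>\<close> is a difference of two
  diagonal entries of \<open>B\<close>, and there are at most \<open>n\<^sup>2 - n + 1\<close> of those: the \<open>n\<^sup>2 - n\<close>
  off-diagonal pairs, plus \<open>0\<close>.\<close>

lemma nonzero_mat_lowest_leftmost_entry:
  assumes Z: "Z \<in> carrier_mat n n" and nz: "Z \<noteq> 0\<^sub>m n n"
  obtains i j where "i < n" "j < n" "Z $$ (i,j) \<noteq> 0"
    and "\<And>k l. i < k \<Longrightarrow> k < n \<Longrightarrow> l < n \<Longrightarrow> Z $$ (k,l) = 0"
    and "\<And>l. l < j \<Longrightarrow> Z $$ (i,l) = 0"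
proof -
  define I where "I = {i. i < n \<and> (\<exists>j<n. Z $$ (i,j) \<noteq> 0)}"
  have "I \<noteq> {}"
  proof
    assume "I = {}"
    then have "Z = 0\<^sub>m n n" using Z unfolding I_def by (intro eq_matI) auto
    with nz show False by contradiction
  qed
  moreover have "finite I" unfolding I_def by simp
  ultimately have i: "Max I \<in> I" "\<And>k. k \<in> I \<Longrightarrow> k \<le> Max I" by auto
  define J where "J = {j. j < n \<and> Z $$ (Max I, j) \<noteq> 0}"
  have "J \<noteq> {}" "finite J" using i(1) unfolding I_def J_def by auto
  then have j: "Min J \<in> J" "\<And>l. l \<in> J \<Longrightarrow> Min J \<le> l" by auto
  show ?thesis
  proof (rule that[of "Max I" "Min J"])
    show "Max I < n" using i(1) unfolding I_def by simp
    show "Min J < n" "Z $$ (Max I, Min J) \<noteq> 0" using j(1) unfolding J_def by auto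
    show "Z $$ (k,l) = 0" if "Max I < k" "k < n" "l < n" for k l
      using that i(2)[of k] unfolding I_def by fastforce
    show "Z $$ (Max I, l) = 0" if "l < Min J" for l
      using that j(2)[of l] \<open>Min J < n\<close> unfolding J_def by fastforce
  qed
qed

lemma upper_triangular_mult_mat_lowest_row:
  assumes B: "B \<in> carrier_mat n n" and Z: "Z \<in> carrier_mat n n"
    and "upper_triangular B" and "i < n" and "j < n"
    and below: "\<And>k. i < k \<Longrightarrow> k < n \<Longrightarrow> Z $$ (k,j) = 0"
  shows "(B * Z) $$ (i,j) = B $$ (i,i) * Z $$ (i,j)"
proof -
  have "(B * Z) $$ (i,j) = (\<Sum>k\<in>{0..<n}. B $$ (i,k) * Z $$ (k,j))"
    using B Z assms(4,5) by (simp add: scalar_prod_def)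
  also have "\<dots> = (\<Sum>k\<in>{0..<n}. if k = i then B $$ (i,i) * Z $$ (i,j) else 0)"
  proof (rule sum.cong)
    fix k assume "k \<in> {0..<n}"
    then show "B $$ (i,k) * Z $$ (k,j) = (if k = i then B $$ (i,i) * Z $$ (i,j) else 0)"
      using assms upper_triangularD[of B k i] below[of k] by (cases k i rule: linorder_cases) auto
  qed simp
  finally show ?thesis using \<open>i < n\<close> by simp
qed

lemma mult_upper_triangular_mat_leftmost_column:
  assumes B: "B \<in> carrier_mat n n" and Z: "Z \<in> carrier_mat n n"
    and "upper_triangular B" and "i < n" and "j < n"
    and left: "\<And>l. l < j \<Longrightarrow> Z $$ (i,l) = 0"
  shows "(Z * B) $$ (i,j) = Z $$ (i,j) * B $$ (j,j)"
proof -
  have "(Z * B) $$ (i,j) = (\<Sum>k\<in>{0..<n}. Z $$ (i,k) * B $$ (k,j))"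
    using B Z assms(4,5) by (simp add: scalar_prod_def)
  also have "\<dots> = (\<Sum>k\<in>{0..<n}. if k = j then Z $$ (i,j) * B $$ (j,j) else 0)"
  proof (rule sum.cong)
    fix k assume "k \<in> {0..<n}"
    then show "Z $$ (i,k) * B $$ (k,j) = (if k = j then Z $$ (i,j) * B $$ (j,j) else 0)"
      using assms upper_triangularD[of B j k] left[of k] by (cases k j rule: linorder_cases) auto
  qed simp
  finally show ?thesis using \<open>j < n\<close> by simp
qed

lemma upper_triangular_commutator_eigenvalue:
  fixes B Z :: "'a::field mat"
  assumes B: "B \<in> carrier_mat n n" and Z: "Z \<in> carrier_mat n n"
    and ut: "upper_triangular B"
    and eigen: "B * Z - Z * B = \<nu> \<cdot>\<^sub>m Z" and nz: "Z \<noteq> 0\<^sub>m n n"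
  shows "\<exists>i<n. \<exists>j<n. \<nu> = B $$ (i,i) - B $$ (j,j)"
proof -
  obtain i j where ij: "i < n" "j < n" "Z $$ (i,j) \<noteq> 0"
    and below: "\<And>k l. i < k \<Longrightarrow> k < n \<Longrightarrow> l < n \<Longrightarrow> Z $$ (k,l) = 0"
    and left: "\<And>l. l < j \<Longrightarrow> Z $$ (i,l) = 0"
    using nonzero_mat_lowest_leftmost_entry[OF Z nz] by blast
  have "B $$ (i,i) * Z $$ (i,j) - Z $$ (i,j) * B $$ (j,j) = \<nu> * Z $$ (i,j)"
    using arg_cong[OF eigen, of "\<lambda>M. M $$ (i,j)"] B Z ij
      upper_triangular_mult_mat_lowest_row[OF B Z ut ij(1,2) below]
      mult_upper_triangular_mat_leftmost_column[OF B Z ut ij(1,2) left]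
    by simp
  then have "(B $$ (i,i) - B $$ (j,j)) * Z $$ (i,j) = \<nu> * Z $$ (i,j)"
    by (simp add: algebra_simps)
  then show ?thesis using ij by auto
qed

lemma similar_mat_wit_commutator_eigen:
  fixes X Y :: "'a::comm_ring_1 mat"
  assumes wit: "similar_mat_wit X B P Q"
    and X: "X \<in> carrier_mat n n" and Y: "Y \<in> carrier_mat n n"
    and eigen: "X * Y - Y * X = \<nu> \<cdot>\<^sub>m Y"
  shows "B * (Q * Y * P) - (Q * Y * P) * B = \<nu> \<cdot>\<^sub>m (Q * Y * P)"
    and "Y = P * (Q * Y * P) * Q"
proof -
  have P: "P \<in> carrier_mat n n" and Q: "Q \<in> carrier_mat n n" and B: "B \<in> carrier_mat n n"
    and PQ: "P * Q = 1\<^sub>m n" and QP: "Q * P = 1\<^sub>m n" and XB: "X = P * B * Q"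
    using wit X unfolding similar_mat_wit_def Let_def by auto
  have "Q * (X * Y) * P = (Q * P) * B * (Q * Y * P)"
    using P Q B Y by (simp add: XB assoc_mult_mat[of _ n n _ n _ n])
  then have "B * (Q * Y * P) = Q * (X * Y) * P"
    using B QP by simp
  moreover have "Q * (Y * X) * P = (Q * Y * P) * B * (Q * P)"
    using P Q B Y by (simp add: XB assoc_mult_mat[of _ n n _ n _ n])
  then have "(Q * Y * P) * B = Q * (Y * X) * P"
    using B P Q Y QP by simp
  moreover have "Q * (X * Y - Y * X) * P = Q * (X * Y) * P - Q * (Y * X) * P"
    using X Y P Q
    by (simp add: mult_minus_distrib_mat[of Q n n _ n] minus_mult_distrib_mat[of _ n n _ _ n])
  ultimately show "B * (Q * Y * P) - (Q * Y * P) * B = \<nu> \<cdot>\<^sub>m (Q * Y * P)"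
    using P Q Y by (simp add: eigen mult_smult_distrib[of _ n n] mult_smult_assoc_mat[of _ n n])
  have "P * (Q * Y * P) * Q = (P * Q) * Y * (P * Q)"
    using P Q Y by (simp add: assoc_mult_mat[of _ n n _ n _ n])
  then show "Y = P * (Q * Y * P) * Q"
    using Y PQ by simp
qed

lemma commutator_eigenvalues_diag_differences:
  fixes X :: "complex mat"
  assumes X: "X \<in> carrier_mat n n"
  obtains d where "\<And>Y \<nu>. Y \<in> carrier_mat n n \<Longrightarrow> Y \<noteq> 0\<^sub>m n n \<Longrightarrow> X * Y - Y * X = \<nu> \<cdot>\<^sub>m Y \<Longrightarrow>
    \<nu> \<in> (\<lambda>(i,j). d i - d j) ` ({..<n} \<times> {..<n})"
proof -
  obtain es where "char_poly X = (\<Prod>a\<leftarrow>es. [:- a, 1:])"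
    using char_poly_factorized[OF X] by blast
  then obtain B P Q where B: "B \<in> carrier_mat n n" "upper_triangular B"
    and wit: "similar_mat_wit X B P Q"
    using schur_decomposition_exists[OF X] unfolding similar_mat_def by blast
  show ?thesis
  proof (rule that[of "\<lambda>i. B $$ (i,i)"])
    fix Y \<nu> assume Y: "Y \<in> carrier_mat n n" and "Y \<noteq> 0\<^sub>m n n"
      and eigen: "X * Y - Y * X = \<nu> \<cdot>\<^sub>m Y"
    have PQ: "P \<in> carrier_mat n n" "Q \<in> carrier_mat n n"
      using wit X unfolding similar_mat_wit_def Let_def by auto
    note Z = similar_mat_wit_commutator_eigen[OF wit X Y eigen]
    have "Q * Y * P \<noteq> 0\<^sub>m n n"
      using Z(2) PQ \<open>Y \<noteq> 0\<^sub>m n n\<close> by auto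
    with upper_triangular_commutator_eigenvalue[OF B(1) _ B(2) Z(1)] PQ Y
    show "\<nu> \<in> (\<lambda>(i,j). B $$ (i,i) - B $$ (j,j)) ` ({..<n} \<times> {..<n})" by fastforce
  qed
qed

lemma card_differences_le:
  fixes d :: "nat \<Rightarrow> 'a::ab_group_add"
  shows "card ((\<lambda>(i,j). d i - d j) ` ({..<n} \<times> {..<n})) \<le> n ^ 2 - n + 1"
proof -
  define off_diag where "off_diag = {..<n} \<times> {..<n} - (\<lambda>i. (i,i)) ` {..<n}"
  have "card off_diag = n ^ 2 - n"
    unfolding off_diag_def
    by (subst card_Diff_subset) (auto simp: card_image inj_on_def power2_eq_square)
  have "(\<lambda>(i,j). d i - d j) ` ({..<n} \<times> {..<n}) \<subseteq> insert 0 ((\<lambda>(i,j). d i - d j) ` off_diag)"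
    unfolding off_diag_def by auto
  then have "card ((\<lambda>(i,j). d i - d j) ` ({..<n} \<times> {..<n}))
      \<le> card (insert 0 ((\<lambda>(i,j). d i - d j) ` off_diag))"
    by (intro card_mono) (auto simp: off_diag_def)
  also have "\<dots> \<le> card off_diag + 1"
    using card_image_le[of off_diag "\<lambda>(i,j). d i - d j"]
    by (simp add: off_diag_def card_insert_if)
  finally show ?thesis using \<open>card off_diag = n ^ 2 - n\<close> by simp
qed

lemma lie_rep_eigenvector:
  assumes "lie_rep sc br n \<rho>" and "br x y = sc \<nu> y"
  shows "\<rho> x * \<rho> y - \<rho> y * \<rho> x = \<nu> \<cdot>\<^sub>m \<rho> y"
  using assms unfolding lie_rep_def by metis

theorem lemma2:
  fixes sc :: "complex \<Rightarrow> 'L::ab_group_add \<Rightarrow> 'L"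
    and br :: "'L \<Rightarrow> 'L \<Rightarrow> 'L"
    and n :: nat
    and \<rho> :: "'L \<Rightarrow> complex mat"
    and x :: 'L and y :: "nat \<Rightarrow> 'L" and \<nu> :: "nat \<Rightarrow> complex"
  assumes "lie_algebra sc br"
    and "lie_rep sc br n \<rho>"
    and "\<And>k. br x (y k) = sc (\<nu> k) (y k)"
  shows "finite {\<nu> k | k. \<rho> (y k) \<noteq> 0\<^sub>m n n} \<and>
         card {\<nu> k | k. \<rho> (y k) \<noteq> 0\<^sub>m n n} \<le> n ^ 2 - n + 1"
proof -
  have carrier: "\<rho> a \<in> carrier_mat n n" for a
    using assms(2) unfolding lie_rep_def by blast
  obtain d where d: "\<And>Y \<nu>. Y \<in> carrier_mat n n \<Longrightarrow> Y \<noteq> 0\<^sub>m n n \<Longrightarrow>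
      \<rho> x * Y - Y * \<rho> x = \<nu> \<cdot>\<^sub>m Y \<Longrightarrow> \<nu> \<in> (\<lambda>(i,j). d i - d j) ` ({..<n} \<times> {..<n})"
    using commutator_eigenvalues_diag_differences[OF carrier] by blast
  have "{\<nu> k | k. \<rho> (y k) \<noteq> 0\<^sub>m n n} \<subseteq> (\<lambda>(i,j). d i - d j) ` ({..<n} \<times> {..<n})"
    using d[OF carrier] lie_rep_eigenvector[OF assms(2,3)] by blast
  then show ?thesis
    using card_differences_le[of d n] by (meson card_mono finite_SigmaI finite_imageI
        finite_lessThan finite_subset le_trans)
qed

end
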